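(* Let $e(\tau,s)$ be a complete equation of state, let $s_0$ be fixed, and assume the isentrope $\tau\mapsto e(\tau,s_0)$ is convex. Let $\mathcal A=\{\bm u=(\rho,\bm m,E)\in\mathbb R^{d+2}:\rho>0,\ \rho\,\mathsf e(\bm u)\ge \rho\, e(\rho^{-1},s_0)\}$, where $\mathsf e(\bm u)=E/\rho-\|\bm m\|^2_{\ell^2}/(2\rho^2)$. Let $\mathcal V$ be a finite index set and, for each $i\in\mathcal V$, let $\mathcal I(i)\subset\mathcal V$ be an index set containing $i$. Let $\{\mathsf U_i^n\}_{i\in\mathcal V}\subset\mathcal A$, and suppose there exist $\hat\lambda_{ij}>0$ such that $\overline{\mathsf U}^n_{ij}(\hat\lambda_{ij})\in\mathcal A$ for each $i\in\mathcal V$ and all $j\in\mathcal I(i)$. Define $$\mathsf U_i^{n+1}=\sum_{k\in\mathcal I(i)}\omega^n_{ik}\mathsf U_k^n+\sum_{j\in\mathcal I(i)\setminus\{i\}}\mu^n_{ij}\,\overline{\mathsf U}^n_{ij}(\hat\lambda_{ij}),$$ where $\omega^n_{ik},\mu^n_{ij}\in[0,1]$ and $\sum_{k\in\mathcal I(i)}\omega^n_{ik}+\sum_{j\in\mathcal I(i)\setminus\{i\}}\mu^n_{ij}=1$. Then $\mathsf U_i^{n+1}\in\mathcal A$ for every $i\in\mathcal V$.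
   Context: $\overline{\mathsf U}^n_{ij}(\lambda)$ denotes the auxiliary state $\tfrac12(\mathsf U_i^n+\mathsf U_j^n)-\tfrac1{2\lambda}(\mathbb f(\mathsf U_j^n)-\mathbb f(\mathsf U_i^n))\bm n_{ij}$ for some unit vector $\bm n_{ij}$, where $\mathbb f$ is the Euler flux; only the hypothesis that these states lie in $\mathcal A$ is used. A complete equation of state is a function $e(\tau,s)$ giving specific internal energy in terms of specific volume and specific entropy. *)

theory Defs
  imports "HOL-Analysis.Analysis"
begin

type_synonym ('d) state = "real \<times> (real^'d) \<times> real"

definition dens :: "('d::finite) state \<Rightarrow> real" where "dens u = fst u"
definition mom :: "('d::finite) state \<Rightarrow> real^'d" where "mom u = fst (snd u)"
definition toten :: "('d::finite) state \<Rightarrow> real" where "toten u = snd (snd u)"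

definition int_energy :: "('d::finite) state \<Rightarrow> real" where
  "int_energy u = toten u / dens u - (norm (mom u))^2 / (2 * (dens u)^2)"

definition admissible_set :: "(real \<Rightarrow> real \<Rightarrow> real) \<Rightarrow> real \<Rightarrow> ('d::finite) state set" where
  "admissible_set e s0 = {u. dens u > 0 \<and>
      dens u * int_energy u \<ge> dens u * e (1 / dens u) s0}"

definition spec_entropy :: "(real \<Rightarrow> real \<Rightarrow> real) \<Rightarrow> ('d::finite) state \<Rightarrow> real" where
  "spec_entropy e u = (SOME s. e (1 / dens u) s = int_energy u)"

definition pressure :: "(real \<Rightarrow> real \<Rightarrow> real) \<Rightarrow> ('d::finite) state \<Rightarrow> real" where
  "pressure e u = - deriv (\<lambda>\<tau>. e \<tau> (spec_entropy e u)) (1 / dens u)"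

definition euler_flux_n :: "(real \<Rightarrow> real \<Rightarrow> real) \<Rightarrow> ('d::finite) state \<Rightarrow> real^'d \<Rightarrow> ('d::finite) state" where
  "euler_flux_n e u n =
     (let \<rho> = dens u; m = mom u; E = toten u; p = pressure e u; v = (m \<bullet> n) / \<rho>
      in (m \<bullet> n, v *\<^sub>R m + p *\<^sub>R n, v * (E + p)))"

definition bar_state :: "(real \<Rightarrow> real \<Rightarrow> real) \<Rightarrow> ('d::finite) state \<Rightarrow> ('d::finite) state \<Rightarrow> real^'d \<Rightarrow> real \<Rightarrow> ('d::finite) state" where
  "bar_state e Ui Uj n lam =
     (1/2) *\<^sub>R (Ui + Uj) - (1 / (2 * lam)) *\<^sub>R (euler_flux_n e Uj n - euler_flux_n e Ui n)"

end

theory Submission imports Defs begin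

text \<open>Multiplying the defining inequality by \<open>\<rho> > 0\<close> exhibits \<open>\<A>\<close> as the epigraph, in the
  energy variable \<open>E\<close>, of \<open>(\<rho>, m) \<mapsto> |m|\<^sup>2/(2\<rho>) + \<rho> e(1/\<rho>, s\<^sub>0)\<close> over \<open>\<rho> > 0\<close>. The first
  summand is the convex quadratic-over-linear function, the second the perspective of the convex
  isentrope, so \<open>\<A>\<close> is convex. The update is a convex combination of the states \<open>U\<^sub>k\<close> and of the
  bar states, all of which lie in \<open>\<A>\<close> by hypothesis.\<close>

lemma power2_divide_convex_combination:
  fixes a b r1 r2 p q :: real
  assumes "0 < a" "0 < b" "0 < r1" "0 < r2"
  shows "(a * p + b * q)\<^sup>2 / (a * r1 + b * r2) \<le> a * (p\<^sup>2 / r1) + b * (q\<^sup>2 / r2)"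
proof -
  have gap: "(a * r1 + b * r2) * (a * (p\<^sup>2 / r1) + b * (q\<^sup>2 / r2)) - (a * p + b * q)\<^sup>2
      = a * b * (p * r2 - q * r1)\<^sup>2 / (r1 * r2)"
    using assms by (simp add: field_simps power2_eq_square)
  have "0 \<le> a * b * (p * r2 - q * r1)\<^sup>2 / (r1 * r2)"
    using assms by simp
  then have "(a * p + b * q)\<^sup>2 \<le> (a * r1 + b * r2) * (a * (p\<^sup>2 / r1) + b * (q\<^sup>2 / r2))"
    using gap by linarith
  moreover have "0 < a * r1 + b * r2"
    using assms by (simp add: add_pos_pos)
  ultimately show ?thesis
    by (simp add: divide_le_eq mult.commute)
qed

lemma convex_on_norm_power2_divide:
  "convex_on ({0<..} \<times> UNIV) (\<lambda>x :: real \<times> 'a::real_normed_vector. (norm (snd x))\<^sup>2 / fst x)"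
proof (rule convex_onI)
  fix t :: real and x y :: "real \<times> 'a"
  assume t: "0 < t" "t < 1" and "x \<in> {0<..} \<times> UNIV" "y \<in> {0<..} \<times> UNIV"
  then have x: "0 < fst x" and y: "0 < fst y"
    by (auto simp: mem_Times_iff)
  have "norm ((1 - t) *\<^sub>R snd x + t *\<^sub>R snd y) \<le> (1 - t) * norm (snd x) + t * norm (snd y)"
    using t by (metis abs_of_nonneg less_eq_real_def diff_ge_0_iff_ge norm_scaleR norm_triangle_ineq)
  then have "(norm ((1 - t) *\<^sub>R snd x + t *\<^sub>R snd y))\<^sup>2 \<le> ((1 - t) * norm (snd x) + t * norm (snd y))\<^sup>2"
    by (simp add: power_mono)
  moreover have "0 < (1 - t) * fst x + t * fst y"
    using t x y by (simp add: add_pos_pos)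
  ultimately have "(norm ((1 - t) *\<^sub>R snd x + t *\<^sub>R snd y))\<^sup>2 / ((1 - t) * fst x + t * fst y)
      \<le> ((1 - t) * norm (snd x) + t * norm (snd y))\<^sup>2 / ((1 - t) * fst x + t * fst y)"
    by (simp add: divide_right_mono)
  also have "\<dots> \<le> (1 - t) * ((norm (snd x))\<^sup>2 / fst x) + t * ((norm (snd y))\<^sup>2 / fst y)"
    using t x y by (intro power2_divide_convex_combination) auto
  finally show "(norm (snd ((1 - t) *\<^sub>R x + t *\<^sub>R y)))\<^sup>2 / fst ((1 - t) *\<^sub>R x + t *\<^sub>R y)
      \<le> (1 - t) * ((norm (snd x))\<^sup>2 / fst x) + t * ((norm (snd y))\<^sup>2 / fst y)"
    by simp
qed (simp add: convex_Times)

lemma convex_on_perspective: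
  assumes "convex_on {0<..} f"
  shows "convex_on {0<..} (\<lambda>r. r * f (1 / r))"
proof (rule convex_onI)
  fix t x y :: real
  assume t: "0 < t" "t < 1" and x: "x \<in> {0<..}" and y: "y \<in> {0<..}"
  define R where "R = (1 - t) * x + t * y"
  have R: "0 < R"
    using t x y by (simp add: R_def add_pos_pos)
  define s where "s = t * y / R"
  have one_minus_s: "1 - s = (1 - t) * x / R"
    using R by (simp add: s_def R_def field_simps)
  have "0 \<le> 1 - s"
    unfolding one_minus_s using t x R by simp
  then have s: "0 \<le> s" "s \<le> 1"
    using t y R by (auto simp: s_def)
  have "(1 - s) * (1 / x) + s * (1 / y) = 1 / R"
    unfolding one_minus_s using x y R by (simp add: s_def field_simps)
  then have "f (1 / R) \<le> (1 - s) * f (1 / x) + s * f (1 / y)"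
    using convex_onD[OF assms s, of "1 / x" "1 / y"] x y by simp
  then have "R * f (1 / R) \<le> R * ((1 - s) * f (1 / x) + s * f (1 / y))"
    using R by simp
  also have "\<dots> = (1 - t) * (x * f (1 / x)) + t * (y * f (1 / y))"
    unfolding one_minus_s using R by (simp add: s_def field_simps)
  finally show "((1 - t) *\<^sub>R x + t *\<^sub>R y) * f (1 / ((1 - t) *\<^sub>R x + t *\<^sub>R y))
      \<le> (1 - t) * (x * f (1 / x)) + t * (y * f (1 / y))"
    by (simp add: R_def)
qed simp

lemma convex_on_fst:
  assumes "convex_on S f" "convex T"
  shows "convex_on (S \<times> T) (\<lambda>x. f (fst x))"
  using assms by (auto simp: convex_on_def convex_Times)

lemma convex_sum_plus_sum:
  fixes C :: "'a::real_vector set"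
  assumes "finite A" "finite B" "convex C"
    and "(\<Sum>i\<in>A. f i) + (\<Sum>j\<in>B. g j) = 1"
    and "\<And>i. i \<in> A \<Longrightarrow> 0 \<le> f i" "\<And>j. j \<in> B \<Longrightarrow> 0 \<le> g j"
    and "\<And>i. i \<in> A \<Longrightarrow> x i \<in> C" "\<And>j. j \<in> B \<Longrightarrow> y j \<in> C"
  shows "(\<Sum>i\<in>A. f i *\<^sub>R x i) + (\<Sum>j\<in>B. g j *\<^sub>R y j) \<in> C"
proof -
  let ?S = "Inl ` A \<union> Inr ` B"
  have disjoint: "Inl ` A \<inter> Inr ` B = {}"
    by auto
  have "(\<Sum>k\<in>?S. case_sum f g k *\<^sub>R case_sum x y k) \<in> C"
  proof (rule convex_sum)
    show "sum (case_sum f g) ?S = 1"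
      using assms(1,2,4) by (simp add: sum.union_disjoint[OF _ _ disjoint] sum.reindex)
  qed (use assms in auto)
  then show ?thesis
    using assms(1,2) by (simp add: sum.union_disjoint[OF _ _ disjoint] sum.reindex)
qed

lemma admissible_set_iff:
  "u \<in> admissible_set e s0 \<longleftrightarrow>
     0 < dens u \<and> (norm (mom u))\<^sup>2 / (2 * dens u) + dens u * e (1 / dens u) s0 \<le> toten u"
proof -
  have "0 < dens u \<Longrightarrow> dens u * int_energy u = toten u - (norm (mom u))\<^sup>2 / (2 * dens u)"
    unfolding int_energy_def by (simp add: field_simps power2_eq_square)
  then show ?thesis
    unfolding admissible_set_def by auto
qed

lemma convex_admissible_set:
  assumes "convex_on {0<..} (\<lambda>\<tau>. e \<tau> s0)"
  shows "convex (admissible_set e s0 :: 'd::finite state set)"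
proof -
  define K :: "real \<times> (real^'d) \<Rightarrow> real"
    where "K x = (1 / 2) * ((norm (snd x))\<^sup>2 / fst x) + fst x * e (1 / fst x) s0" for x
  have "convex_on ({0<..} \<times> UNIV) K"
    unfolding K_def
    by (intro convex_on_add convex_on_cmul convex_on_norm_power2_divide
        convex_on_fst convex_on_perspective assms) auto
  then have "convex ((\<lambda>u. ((dens u, mom u), toten u)) -` epigraph ({0<..} \<times> UNIV) K)"
    by (intro convex_linear_vimage convex_epigraphI)
       (auto intro!: linearI simp: dens_def mom_def toten_def)
  also have "(\<lambda>u. ((dens u, mom u), toten u)) -` epigraph ({0<..} \<times> UNIV) K = admissible_set e s0"
    by (auto simp: admissible_set_iff mem_epigraph K_def)
  finally show ?thesis .
qed

theorem proposition4p1: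
  fixes e :: "real \<Rightarrow> real \<Rightarrow> real" and s0 :: real
    and V :: "'v set" and I :: "'v \<Rightarrow> 'v set"
    and U :: "'v \<Rightarrow> ('d::finite) state"
    and nv :: "'v \<Rightarrow> 'v \<Rightarrow> real^'d"
    and lam :: "'v \<Rightarrow> 'v \<Rightarrow> real"
    and \<omega> \<mu> :: "'v \<Rightarrow> 'v \<Rightarrow> real"
  assumes convex_isentrope: "convex_on {0<..} (\<lambda>\<tau>. e \<tau> s0)"
    and finV: "finite V"
    and I_sub: "\<And>i. i \<in> V \<Longrightarrow> I i \<subseteq> V"
    and I_self: "\<And>i. i \<in> V \<Longrightarrow> i \<in> I i"
    and U_adm: "\<And>i. i \<in> V \<Longrightarrow> U i \<in> admissible_set e s0"
    and n_unit: "\<And>i j. i \<in> V \<Longrightarrow> j \<in> I i \<Longrightarrow> norm (nv i j) = 1"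
    and lam_pos: "\<And>i j. i \<in> V \<Longrightarrow> j \<in> I i \<Longrightarrow> lam i j > 0"
    and bar_adm: "\<And>i j. i \<in> V \<Longrightarrow> j \<in> I i \<Longrightarrow>
                     bar_state e (U i) (U j) (nv i j) (lam i j) \<in> admissible_set e s0"
    and \<omega>_range: "\<And>i k. i \<in> V \<Longrightarrow> k \<in> I i \<Longrightarrow> 0 \<le> \<omega> i k \<and> \<omega> i k \<le> 1"
    and \<mu>_range: "\<And>i j. i \<in> V \<Longrightarrow> j \<in> I i - {i} \<Longrightarrow> 0 \<le> \<mu> i j \<and> \<mu> i j \<le> 1"
    and sum_one: "\<And>i. i \<in> V \<Longrightarrow>
                     (\<Sum>k\<in>I i. \<omega> i k) + (\<Sum>j\<in>I i - {i}. \<mu> i j) = 1"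
  shows "\<forall>i\<in>V. (\<Sum>k\<in>I i. \<omega> i k *\<^sub>R U k)
              + (\<Sum>j\<in>I i - {i}. \<mu> i j *\<^sub>R bar_state e (U i) (U j) (nv i j) (lam i j))
            \<in> admissible_set e s0"
proof
  fix i assume i: "i \<in> V"
  have "finite (I i)"
    using finite_subset[OF I_sub[OF i] finV] .
  then show "(\<Sum>k\<in>I i. \<omega> i k *\<^sub>R U k)
      + (\<Sum>j\<in>I i - {i}. \<mu> i j *\<^sub>R bar_state e (U i) (U j) (nv i j) (lam i j))
      \<in> admissible_set e s0"
    using i I_sub U_adm bar_adm \<omega>_range \<mu>_range
    by (intro convex_sum_plus_sum convex_admissible_set convex_isentrope sum_one) auto
qed

end
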